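(* Consider the following two-party game. Alice and Bob share a two-qubit state $\rho$ on $\mathbb{C}^2\otimes\mathbb{C}^2$. For each $x=x_1x_2x_3\in\{0,1\}^3$, Alice applies a completely positive trace-preserving map $\Lambda_x$ to her qubit (the first tensor factor), producing $\rho_x=(\Lambda_x\otimes\mathrm{id})(\rho)$, and sends her qubit to Bob. For each $y\in\{1,2,3\}$, Bob performs a two-outcome projective measurement $\{\Pi_y^0,\Pi_y^1\}$ on the whole two-qubit system. The success probability is $$\mathcal{S}_Q=\frac{1}{24}\sum_{y=1}^{3}\sum_{x\in\{0,1\}^3}\mathrm{Tr}\big[\rho_x\,\Pi_y^{x_y}\big].$$ Then the maximum of $\mathcal{S}_Q$ over all shared two-qubit states $\rho$, all choices of maps $\Lambda_x$ and all projective measurements $\{\Pi_y^b\}$ equals $\mathcal{S}_Q^{opt}=\frac{1}{2}+\frac{1}{\sqrt{6}}\approx 0.908$.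
   Context: This is the "3-bit variant of prepare-measure random access code": Bob's goal on input $y$ is to output the $y$-th bit $x_y$ of Alice's input string $x$. *)

theory Defs
  imports Complex_Main "Jordan_Normal_Form.Matrix"
begin

text \<open>Matrices are complex JNF matrices; vectors of C^n are functions nat => complex on indices < n.\<close>

definition mtrace :: "complex mat \<Rightarrow> complex" where
  "mtrace A = (\<Sum>i<dim_row A. A $$ (i, i))"

definition hermitian_n :: "nat \<Rightarrow> complex mat \<Rightarrow> bool" where
  "hermitian_n n A \<longleftrightarrow> A \<in> carrier_mat n n \<and>
     (\<forall>i<n. \<forall>j<n. A $$ (i, j) = cnj (A $$ (j, i)))"

definition psd :: "nat \<Rightarrow> complex mat \<Rightarrow> bool" where
  "psd n A \<longleftrightarrow> hermitian_n n A \<and>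
     (\<forall>v :: nat \<Rightarrow> complex. 0 \<le> Re (\<Sum>i<n. \<Sum>j<n. cnj (v i) * A $$ (i, j) * v j))"

definition density :: "nat \<Rightarrow> complex mat \<Rightarrow> bool" where
  "density n A \<longleftrightarrow> psd n A \<and> mtrace A = 1"

text \<open>(Lambda \<otimes> id_k) applied to a (2k) x (2k) matrix, the qubit being the FIRST tensor factor:
  basis index of |i> \<otimes> |a> is i*k + a.\<close>
definition ampl :: "(complex mat \<Rightarrow> complex mat) \<Rightarrow> nat \<Rightarrow> complex mat \<Rightarrow> complex mat" where
  "ampl \<Lambda> k M = mat (2*k) (2*k) (\<lambda>(r, s).
      \<Lambda> (mat 2 2 (\<lambda>(i, j). M $$ (i*k + r mod k, j*k + s mod k))) $$ (r div k, s div k))"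

definition qubit_linear :: "(complex mat \<Rightarrow> complex mat) \<Rightarrow> bool" where
  "qubit_linear \<Lambda> \<longleftrightarrow>
     (\<forall>A \<in> carrier_mat 2 2. \<Lambda> A \<in> carrier_mat 2 2) \<and>
     (\<forall>A \<in> carrier_mat 2 2. \<forall>B \<in> carrier_mat 2 2. \<Lambda> (A + B) = \<Lambda> A + \<Lambda> B) \<and>
     (\<forall>A \<in> carrier_mat 2 2. \<forall>c. \<Lambda> (c \<cdot>\<^sub>m A) = c \<cdot>\<^sub>m \<Lambda> A)"

definition completely_positive :: "(complex mat \<Rightarrow> complex mat) \<Rightarrow> bool" where
  "completely_positive \<Lambda> \<longleftrightarrow> (\<forall>k M. psd (2*k) M \<longrightarrow> psd (2*k) (ampl \<Lambda> k M))"

definition trace_preserving :: "(complex mat \<Rightarrow> complex mat) \<Rightarrow> bool" where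
  "trace_preserving \<Lambda> \<longleftrightarrow> (\<forall>A \<in> carrier_mat 2 2. mtrace (\<Lambda> A) = mtrace A)"

definition cptp :: "(complex mat \<Rightarrow> complex mat) \<Rightarrow> bool" where
  "cptp \<Lambda> \<longleftrightarrow> qubit_linear \<Lambda> \<and> completely_positive \<Lambda> \<and> trace_preserving \<Lambda>"

definition projector :: "nat \<Rightarrow> complex mat \<Rightarrow> bool" where
  "projector n P \<longleftrightarrow> hermitian_n n P \<and> P * P = P"

text \<open>Two-outcome projective measurement {P False, P True} on C^n (False = outcome 0).\<close>
definition proj_meas :: "nat \<Rightarrow> (bool \<Rightarrow> complex mat) \<Rightarrow> bool" where
  "proj_meas n P \<longleftrightarrow> projector n (P False) \<and> projector n (P True) \<and> P False + P True = 1\<^sub>m n"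

text \<open>Success probability of the 3-to-1 RAC.  x in {0,1}^3 is a bool list of length 3
  (x_y = x ! (y-1)), y ranges over {1,2,3}.\<close>
definition success :: "complex mat \<Rightarrow> (bool list \<Rightarrow> complex mat \<Rightarrow> complex mat)
     \<Rightarrow> (nat \<Rightarrow> bool \<Rightarrow> complex mat) \<Rightarrow> real" where
  "success \<rho> \<Lambda> Pm = (1/24) * (\<Sum>y\<in>{1..3::nat}. \<Sum>x\<in>{xs::bool list. length xs = 3}.
       Re (mtrace (ampl (\<Lambda> x) 2 \<rho> * Pm y (x ! (y - 1)))))"

definition valid_strategy :: "complex mat \<Rightarrow> (bool list \<Rightarrow> complex mat \<Rightarrow> complex mat)
     \<Rightarrow> (nat \<Rightarrow> bool \<Rightarrow> complex mat) \<Rightarrow> bool" where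
  "valid_strategy \<rho> \<Lambda> Pm \<longleftrightarrow> density 4 \<rho> \<and>
     (\<forall>x. length x = 3 \<longrightarrow> cptp (\<Lambda> x)) \<and> (\<forall>y\<in>{1..3::nat}. proj_meas 4 (Pm y))"

end

theory Submission
  imports Defs
begin

(*
  Write Bob's measurements as Pi_y^b = (1 + (-1)^b O_y) / 2, where O_y = 2 Pi_y^0 - 1 is a Hermitian
  involution with Hilbert-Schmidt norm ||O_y||^2 = 4.  Then S_Q = 1/2 + B/48 for the bias
  B = sum_x sum_y (-1)^(x_y) Re Tr(rho_x O_y).  Grouping each x with its complement x' gives
  B = sum over the four pairs of Re Tr((rho_x - rho_x') C_x) with C_x = sum_y (-1)^(x_y) O_y.
  For states ||rho - sigma||^2 <= 2, because Tr(rho sigma) >= 0, so a weighted AM-GM inequality yields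
  Re Tr((rho_x - rho_x') C_x) <= t + ||C_x||^2 / (2 t), while the parallelogram law gives
  sum_x ||C_x||^2 = 4 sum_y ||O_y||^2 = 48.  With t = sqrt 6 this is B <= 8 sqrt 6.
  Equality needs rho_x - rho_x' = C_x / sqrt 6; a maximally entangled state, suitable local unitaries
  for Alice and observables K_y / sqrt 6 for Bob achieve it.
*)

section \<open>Positive semidefinite kernels\<close>

lemma mult_if_zero_left: "(if P then x else 0) * y = (if P then x * y else (0 :: 'a::mult_zero))"
  by simp

lemma mult_if_zero_right: "x * (if P then y else 0) = (if P then x * y else (0 :: 'a::mult_zero))"
  by simp

definition quad_form :: "nat \<Rightarrow> (nat \<Rightarrow> nat \<Rightarrow> complex) \<Rightarrow> (nat \<Rightarrow> complex) \<Rightarrow> complex" where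
  "quad_form n A v = (\<Sum>i<n. \<Sum>j<n. cnj (v i) * A i j * v j)"

definition psd_fun :: "nat \<Rightarrow> (nat \<Rightarrow> nat \<Rightarrow> complex) \<Rightarrow> bool" where
  "psd_fun n A \<longleftrightarrow> (\<forall>i<n. \<forall>j<n. A i j = cnj (A j i)) \<and> (\<forall>v. 0 \<le> Re (quad_form n A v))"

lemma psd_fun_hermitian: "psd_fun n A \<Longrightarrow> i < n \<Longrightarrow> j < n \<Longrightarrow> A i j = cnj (A j i)"
  unfolding psd_fun_def by blast

lemma psd_fun_quad_form_nonneg: "psd_fun n A \<Longrightarrow> 0 \<le> Re (quad_form n A v)"
  unfolding psd_fun_def by blast

lemma psd_fun_cong:
  assumes "\<And>i j. i < n \<Longrightarrow> j < n \<Longrightarrow> A i j = B i j"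
  shows "psd_fun n A = psd_fun n B"
proof -
  have "quad_form n A = quad_form n B"
    unfolding quad_form_def by (intro ext sum.cong refl) (simp add: assms)
  then show ?thesis unfolding psd_fun_def using assms by auto
qed

lemma psd_iff_psd_fun: "psd n M \<longleftrightarrow> M \<in> carrier_mat n n \<and> psd_fun n (\<lambda>i j. M $$ (i, j))"
  unfolding psd_def hermitian_n_def psd_fun_def quad_form_def by blast

lemma quad_form_supported:
  assumes "S \<subseteq> {..<n}" and "\<And>l. l \<notin> S \<Longrightarrow> v l = 0"
  shows "quad_form n A v = (\<Sum>i\<in>S. \<Sum>j\<in>S. cnj (v i) * A i j * v j)"
proof -
  have "quad_form n A v = (\<Sum>i<n. \<Sum>j\<in>S. cnj (v i) * A i j * v j)"
    unfolding quad_form_def by (intro sum.cong refl sum.mono_neutral_right) (use assms in auto)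
  also have "\<dots> = (\<Sum>i\<in>S. \<Sum>j\<in>S. cnj (v i) * A i j * v j)"
    by (intro sum.mono_neutral_right) (use assms in auto)
  finally show ?thesis .
qed

lemma quad_form_delta:
  assumes "i < n"
  shows "quad_form n A (\<lambda>l. if l = i then 1 else 0) = A i i"
  using assms by (subst quad_form_supported[of "{i}"]) auto

lemma quad_form_two_points:
  assumes "i < n" "j < n" "i \<noteq> j"
  shows "quad_form n A (\<lambda>l. if l = i then a else if l = j then b else 0)
    = cnj a * A i i * a + cnj a * A i j * b + cnj b * A j i * a + cnj b * A j j * b"
  using assms by (subst quad_form_supported[of "{i, j}"]) (auto simp: algebra_simps)

lemma psd_fun_diag_real:
  assumes "psd_fun n A" "i < n"
  shows "A i i = of_real (Re (A i i))"
  using psd_fun_hermitian[OF assms(1) assms(2) assms(2)] by (metis Reals_cnj_iff of_real_Re)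

lemma psd_fun_diag_nonneg:
  assumes "psd_fun n A" "i < n"
  shows "0 \<le> Re (A i i)"
  using psd_fun_quad_form_nonneg[OF assms(1)] quad_form_delta[OF assms(2)] by metis

lemma quadratic_nonneg_imp_le:
  fixes p q w :: real
  assumes p: "0 \<le> p" and w: "0 \<le> w" and nonneg: "\<And>s. 0 \<le> p * s\<^sup>2 * w - 2 * s * w + q"
  shows "w \<le> p * q"
proof (cases "w = 0 \<or> 0 < p")
  case True
  then show ?thesis
  proof
    assume "0 < p"
    with nonneg[of "1 / p"] have "0 \<le> q - w / p" by (simp add: power2_eq_square field_simps)
    with \<open>0 < p\<close> show ?thesis by (simp add: field_simps)
  qed (use nonneg[of 0] p in simp)
next
  case False
  define s where "s = (\<bar>q\<bar> + 1) / (2 * w)"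
  have "p * s\<^sup>2 * w \<le> 0" using False w by (simp add: mult_nonpos_nonneg)
  moreover have "2 * s * w = \<bar>q\<bar> + 1" using False w by (simp add: s_def)
  ultimately show ?thesis using nonneg[of s] by linarith
qed

lemma psd_fun_offdiag_le:
  assumes A: "psd_fun n A" and i: "i < n" and j: "j < n"
  shows "(cmod (A i j))\<^sup>2 \<le> Re (A i i) * Re (A j j)"
proof (cases "i = j")
  case True
  have "cmod (A i i) = \<bar>Re (A i i)\<bar>" using psd_fun_diag_real[OF A i] by (metis norm_of_real)
  then show ?thesis using True by (simp add: power2_eq_square)
next
  case False
  define z where "z = A i j"
  define d1 where "d1 = Re (A i i)"
  define d2 where "d2 = Re (A j j)"
  have Aii: "A i i = of_real d1" and Ajj: "A j j = of_real d2" and Aji: "A j i = cnj z"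
    unfolding d1_def d2_def z_def
    by (fact psd_fun_diag_real[OF A i] psd_fun_diag_real[OF A j] psd_fun_hermitian[OF A j i])+
  have "0 \<le> d1 * s\<^sup>2 * (cmod z)\<^sup>2 - 2 * s * (cmod z)\<^sup>2 + d2" for s
  proof -
    let ?v = "\<lambda>l. if l = i then - of_real s * z else if l = j then 1 else 0"
    have zz: "cnj z * z = of_real ((cmod z)\<^sup>2)"
      using complex_norm_square[of z] by (simp add: mult.commute)
    have "quad_form n A ?v
        = of_real d1 * of_real s ^ 2 * (cnj z * z) - 2 * of_real s * (cnj z * z) + of_real d2"
      unfolding quad_form_two_points[OF i j False] Aii Ajj Aji z_def[symmetric]
      by (simp add: power2_eq_square algebra_simps)
    also have "\<dots> = of_real (d1 * s\<^sup>2 * (cmod z)\<^sup>2 - 2 * s * (cmod z)\<^sup>2 + d2)"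
      unfolding zz by simp
    finally have "Re (quad_form n A ?v) = d1 * s\<^sup>2 * (cmod z)\<^sup>2 - 2 * s * (cmod z)\<^sup>2 + d2"
      by simp
    then show ?thesis using psd_fun_quad_form_nonneg[OF A, of ?v] by simp
  qed
  moreover have "0 \<le> d1" unfolding d1_def by (rule psd_fun_diag_nonneg[OF A i])
  ultimately show ?thesis unfolding z_def d1_def d2_def by (intro quadratic_nonneg_imp_le) auto
qed

lemma quad_form_shift:
  assumes "m < n"
  shows "quad_form n A (\<lambda>l. v l + (if l = m then a else 0)) = quad_form n A v
    + a * (\<Sum>i<n. cnj (v i) * A i m) + cnj a * (\<Sum>j<n. A m j * v j) + cnj a * A m m * a"
proof -
  have "quad_form n A (\<lambda>l. v l + (if l = m then a else 0)) = quad_form n A v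
      + (\<Sum>i<n. \<Sum>j<n. cnj (v i) * A i j * (if j = m then a else 0))
      + (\<Sum>i<n. (if i = m then cnj a else 0) * (\<Sum>j<n. A i j * v j))
      + (\<Sum>i<n. (if i = m then cnj a else 0) * (\<Sum>j<n. A i j * (if j = m then a else 0)))"
    unfolding quad_form_def
    by (simp add: sum.distrib sum_distrib_left algebra_simps if_distrib[of cnj] cong: if_cong)
  also have "\<dots> = quad_form n A v
      + a * (\<Sum>i<n. cnj (v i) * A i m) + cnj a * (\<Sum>j<n. A m j * v j) + cnj a * A m m * a"
    using assms
    by (simp add: mult_if_zero_left mult_if_zero_right) (simp add: sum_distrib_left sum_distrib_right mult_ac)
  finally show ?thesis .
qed

lemma psd_fun_schur_complement:
  assumes g: "psd_fun n g" and m: "m < n" and pos: "0 < Re (g m m)"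
  shows "psd_fun n (\<lambda>i j. g i j - g i m * g m j / g m m)"
proof -
  define c where "c = Re (g m m)"
  have gmm: "g m m = of_real c" unfolding c_def by (rule psd_fun_diag_real[OF g m])
  show ?thesis
    unfolding psd_fun_def
  proof (intro conjI allI impI)
    fix i j assume i: "i < n" and j: "j < n"
    show "g i j - g i m * g m j / g m m = cnj (g j i - g j m * g m i / g m m)"
      using psd_fun_hermitian[OF g j i] psd_fun_hermitian[OF g m i] psd_fun_hermitian[OF g j m] gmm
      by simp
  next
    fix v :: "nat \<Rightarrow> complex"
    define s where "s = (\<Sum>j<n. g m j * v j)"
    have cs: "(\<Sum>i<n. cnj (v i) * g i m) = cnj s"
      unfolding s_def cnj_sum by (rule sum.cong) (auto simp: psd_fun_hermitian[OF g _ m])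
    have "quad_form n (\<lambda>i j. g i j - g i m * g m j / g m m) v
        = quad_form n g v - (\<Sum>i<n. cnj (v i) * g i m) * (\<Sum>j<n. g m j * v j) / g m m"
      unfolding quad_form_def sum_product
      by (simp add: sum_subtractf sum_divide_distrib algebra_simps)
    also have "\<dots> = quad_form n g (\<lambda>l. v l + (if l = m then - s / c else 0))"
      unfolding quad_form_shift[OF m] cs s_def[symmetric] gmm using pos
      by (simp add: c_def field_simps)
    finally show "0 \<le> Re (quad_form n (\<lambda>i j. g i j - g i m * g m j / g m m) v)"
      using psd_fun_quad_form_nonneg[OF g] by simp
  qed
qed

lemma psd_fun_zero_diag:
  assumes g: "psd_fun n g" and k: "k < n" and zero: "Re (g k k) = 0" and i: "i < n"
  shows "g i k = 0" and "g k i = 0"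
proof -
  show "g i k = 0" using psd_fun_offdiag_le[OF g i k] zero by simp
  then show "g k i = 0" using psd_fun_hermitian[OF g k i] by simp
qed

lemma quad_form_congruence:
  "quad_form n (\<lambda>r s. \<Sum>p<m. \<Sum>q<m. W r p * M p q * cnj (W s q)) v
    = quad_form m M (\<lambda>p. \<Sum>r<n. cnj (W r p) * v r)"
proof -
  have "quad_form n (\<lambda>r s. \<Sum>p<m. \<Sum>q<m. W r p * M p q * cnj (W s q)) v
      = (\<Sum>r<n. \<Sum>s<n. \<Sum>p<m. \<Sum>q<m. cnj (v r) * W r p * M p q * cnj (W s q) * v s)"
    unfolding quad_form_def by (simp add: sum_distrib_left sum_distrib_right mult.assoc)
  also have "\<dots> = (\<Sum>p<m. \<Sum>q<m. \<Sum>r<n. \<Sum>s<n. cnj (v r) * W r p * M p q * cnj (W s q) * v s)"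
    by (subst sum.swap, subst (2) sum.swap, subst (3) sum.swap, subst sum.swap) (rule refl)
  also have "\<dots> = quad_form m M (\<lambda>p. \<Sum>r<n. cnj (W r p) * v r)"
    unfolding quad_form_def by (simp add: sum_distrib_left sum_distrib_right mult_ac)
  finally show ?thesis .
qed

lemma psd_fun_congruence:
  assumes M: "psd_fun m M"
  shows "psd_fun n (\<lambda>r s. \<Sum>p<m. \<Sum>q<m. W r p * M p q * cnj (W s q))"
  unfolding psd_fun_def
proof (intro conjI allI impI)
  fix r s
  have "cnj (\<Sum>p<m. \<Sum>q<m. W s p * M p q * cnj (W r q)) = (\<Sum>p<m. \<Sum>q<m. W r q * M q p * cnj (W s p))"
    unfolding cnj_sum
  proof (intro sum.cong refl)
    fix p q assume "p \<in> {..<m}" "q \<in> {..<m}"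
    then show "cnj (W s p * M p q * cnj (W r q)) = W r q * M q p * cnj (W s p)"
      using psd_fun_hermitian[OF M, of q p] by simp
  qed
  also have "\<dots> = (\<Sum>p<m. \<Sum>q<m. W r p * M p q * cnj (W s q))"
    by (rule sum.swap)
  finally show "(\<Sum>p<m. \<Sum>q<m. W r p * M p q * cnj (W s q))
      = cnj (\<Sum>p<m. \<Sum>q<m. W s p * M p q * cnj (W r q))"
    by simp
next
  fix v
  show "0 \<le> Re (quad_form n (\<lambda>r s. \<Sum>p<m. \<Sum>q<m. W r p * M p q * cnj (W s q)) v)"
    unfolding quad_form_congruence by (rule psd_fun_quad_form_nonneg[OF M])
qed

lemma quad_form_scale:
  "quad_form n (\<lambda>i j. c * A i j) (\<lambda>i. of_real t * v i) = c * of_real (t\<^sup>2) * quad_form n A v"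
  unfolding quad_form_def by (simp add: sum_distrib_left power2_eq_square mult_ac)

section \<open>Trace pairing and Hilbert-Schmidt norm\<close>

definition tr_prod :: "nat \<Rightarrow> (nat \<Rightarrow> nat \<Rightarrow> complex) \<Rightarrow> (nat \<Rightarrow> nat \<Rightarrow> complex) \<Rightarrow> complex" where
  "tr_prod n A B = (\<Sum>i<n. \<Sum>j<n. A i j * B j i)"

lemma tr_prod_cong:
  "(\<And>i j. i < n \<Longrightarrow> j < n \<Longrightarrow> B i j = B' i j) \<Longrightarrow> tr_prod n A B = tr_prod n A B'"
  unfolding tr_prod_def by (intro sum.cong refl) auto

lemma tr_prod_add_right: "tr_prod n A (\<lambda>i j. B i j + C i j) = tr_prod n A B + tr_prod n A C"
  unfolding tr_prod_def by (simp add: distrib_left sum.distrib)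

lemma tr_prod_diff_left: "tr_prod n (\<lambda>i j. A i j - B i j) C = tr_prod n A C - tr_prod n B C"
  unfolding tr_prod_def by (simp add: left_diff_distrib sum_subtractf)

lemma tr_prod_scale_right: "tr_prod n A (\<lambda>i j. c * B i j) = c * tr_prod n A B"
  unfolding tr_prod_def by (simp add: sum_distrib_left mult_ac)

lemma tr_prod_identity_right: "tr_prod n A (\<lambda>i j. if i = j then 1 else 0) = (\<Sum>i<n. A i i)"
  unfolding tr_prod_def by (simp add: mult_if_zero_right)

lemma tr_prod_rank_one: "tr_prod n A (\<lambda>i j. u i * cnj (u j)) = quad_form n A u"
  unfolding tr_prod_def quad_form_def by (simp add: mult_ac)

lemma tr_prod_schur_split:
  assumes g: "psd_fun n g" and k: "k < n" and pos: "0 < Re (g k k)"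
  shows "tr_prod n f g = tr_prod n f (\<lambda>i j. g i j - g i k * g k j / g k k)
    + quad_form n f (\<lambda>i. g i k / sqrt (Re (g k k)))"
proof -
  define c where "c = Re (g k k)"
  have gkk: "g k k = of_real c" unfolding c_def by (rule psd_fun_diag_real[OF g k])
  have sqrt_c: "of_real (sqrt c) * of_real (sqrt c) = (of_real c :: complex)"
    using pos by (simp add: c_def flip: of_real_mult)
  have "g j i = (g j i - g j k * g k i / g k k) + g j k / sqrt c * cnj (g i k / sqrt c)"
    if "i < n" for i j
    using psd_fun_hermitian[OF g k that] pos sqrt_c by (simp add: gkk c_def[symmetric])
  then have "tr_prod n f g = (\<Sum>i<n. \<Sum>j<n. f i j * (g j i - g j k * g k i / g k k)
      + cnj (g i k / sqrt c) * f i j * (g j k / sqrt c))"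
    unfolding tr_prod_def by (intro sum.cong refl) (simp add: algebra_simps)
  then show ?thesis
    unfolding c_def tr_prod_def quad_form_def by (simp add: sum.distrib)
qed

(* Induction on the support of g: splitting off the rank-one part of a Schur complement
   clears one more row and column. *)
lemma psd_fun_tr_prod_nonneg_supported:
  assumes f: "psd_fun n f" and g: "psd_fun n g"
    and supp: "\<And>i j. i < n \<Longrightarrow> j < n \<Longrightarrow> k \<le> i \<or> k \<le> j \<Longrightarrow> g i j = 0"
  shows "0 \<le> Re (tr_prod n f g)"
  using g supp
proof (induction k arbitrary: g)
  case 0
  then have "tr_prod n f g = 0" unfolding tr_prod_def by (intro sum.neutral ballI) simp
  then show ?case by simp
next
  case (Suc k)
  note g = Suc.prems(1) and supp = Suc.prems(2)
  show ?case
  proof (cases "k < n \<and> Re (g k k) \<noteq> 0")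
    case False
    have "g i j = 0" if "i < n" "j < n" "k \<le> i \<or> k \<le> j" for i j
      using that supp[of i j] psd_fun_zero_diag[OF g, of k i] psd_fun_zero_diag[OF g, of k j] False
      by (cases "i = k \<or> j = k") auto
    then show ?thesis by (rule Suc.IH[OF g])
  next
    case True
    then have k: "k < n" and pos: "0 < Re (g k k)"
      using psd_fun_diag_nonneg[OF g, of k] by auto
    let ?g' = "\<lambda>i j. g i j - g i k * g k j / g k k"
    have "g i j - g i k * g k j / g k k = 0" if "i < n" "j < n" "k \<le> i \<or> k \<le> j" for i j
      using that supp[of i j] supp[of i k] supp[of k j] pos by (cases "i = k \<or> j = k") auto
    then have "0 \<le> Re (tr_prod n f ?g')"
      by (intro Suc.IH psd_fun_schur_complement[OF g k pos])
    then show ?thesis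
      unfolding tr_prod_schur_split[OF g k pos] using psd_fun_quad_form_nonneg[OF f] by simp
  qed
qed

lemma psd_fun_tr_prod_nonneg:
  assumes "psd_fun n f" "psd_fun n g"
  shows "0 \<le> Re (tr_prod n f g)"
  using assms by (rule psd_fun_tr_prod_nonneg_supported[where k = n]) auto

definition hs_norm_sq :: "nat \<Rightarrow> (nat \<Rightarrow> nat \<Rightarrow> complex) \<Rightarrow> real" where
  "hs_norm_sq n A = (\<Sum>i<n. \<Sum>j<n. (cmod (A i j))\<^sup>2)"

lemma hs_norm_sq_hermitian:
  assumes "\<And>i j. i < n \<Longrightarrow> j < n \<Longrightarrow> A i j = cnj (A j i)"
  shows "hs_norm_sq n A = Re (tr_prod n A A)"
  unfolding hs_norm_sq_def tr_prod_def Re_sum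
proof (intro sum.cong refl)
  fix i j assume "i \<in> {..<n}" "j \<in> {..<n}"
  then show "(cmod (A i j))\<^sup>2 = Re (A i j * A j i)"
    using assms[of j i] by (simp flip: complex_norm_square)
qed

lemma hs_norm_sq_diff:
  assumes "\<And>i j. i < n \<Longrightarrow> j < n \<Longrightarrow> B i j = cnj (B j i)"
  shows "hs_norm_sq n (\<lambda>i j. A i j - B i j)
    = hs_norm_sq n A + hs_norm_sq n B - 2 * Re (tr_prod n A B)"
proof -
  have diff_sq: "(cmod (a - b))\<^sup>2 = (cmod a)\<^sup>2 + (cmod b)\<^sup>2 - 2 * Re (a * cnj b)" for a b :: complex
    unfolding cmod_power2 by (simp add: power2_eq_square algebra_simps)
  have "hs_norm_sq n (\<lambda>i j. A i j - B i j) = hs_norm_sq n A + hs_norm_sq n B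
      - 2 * (\<Sum>i<n. \<Sum>j<n. Re (A i j * cnj (B i j)))"
    unfolding hs_norm_sq_def diff_sq by (simp only: sum.distrib sum_subtractf sum_distrib_left)
  also have "(\<Sum>i<n. \<Sum>j<n. Re (A i j * cnj (B i j))) = Re (tr_prod n A B)"
    unfolding tr_prod_def Re_sum
  proof (intro sum.cong refl)
    fix i j assume "i \<in> {..<n}" "j \<in> {..<n}"
    then show "Re (A i j * cnj (B i j)) = Re (A i j * B j i)" using assms[of j i] by simp
  qed
  finally show ?thesis .
qed

definition density_fun :: "nat \<Rightarrow> (nat \<Rightarrow> nat \<Rightarrow> complex) \<Rightarrow> bool" where
  "density_fun n A \<longleftrightarrow> psd_fun n A \<and> (\<Sum>i<n. Re (A i i)) = 1"

lemma density_fun_hs_norm_sq_le: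
  assumes "density_fun n A"
  shows "hs_norm_sq n A \<le> 1"
proof -
  have A: "psd_fun n A" and tr: "(\<Sum>i<n. Re (A i i)) = 1"
    using assms unfolding density_fun_def by auto
  have "hs_norm_sq n A \<le> (\<Sum>i<n. \<Sum>j<n. Re (A i i) * Re (A j j))"
    unfolding hs_norm_sq_def by (intro sum_mono psd_fun_offdiag_le[OF A]) auto
  also have "\<dots> = (\<Sum>i<n. Re (A i i)) * (\<Sum>j<n. Re (A j j))" by (simp add: sum_product)
  also have "\<dots> = 1" using tr by simp
  finally show ?thesis .
qed

lemma density_fun_hs_dist_le:
  assumes "density_fun n A" "density_fun n B"
  shows "hs_norm_sq n (\<lambda>i j. A i j - B i j) \<le> 2"
proof -
  have A: "psd_fun n A" and B: "psd_fun n B" using assms unfolding density_fun_def by auto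
  have "hs_norm_sq n (\<lambda>i j. A i j - B i j)
      = hs_norm_sq n A + hs_norm_sq n B - 2 * Re (tr_prod n A B)"
    using hs_norm_sq_diff psd_fun_hermitian[OF B] by blast
  then show ?thesis
    using psd_fun_tr_prod_nonneg[OF A B] density_fun_hs_norm_sq_le[OF assms(1)]
      density_fun_hs_norm_sq_le[OF assms(2)] by linarith
qed

lemma Re_mult_le_weighted:
  fixes a b :: complex
  assumes "0 < t"
  shows "Re (a * b) \<le> t / 2 * (cmod a)\<^sup>2 + (cmod b)\<^sup>2 / (2 * t)"
proof -
  have "0 \<le> (t * cmod a - cmod b)\<^sup>2 / (2 * t)" using assms by simp
  also have "\<dots> = t / 2 * (cmod a)\<^sup>2 + (cmod b)\<^sup>2 / (2 * t) - cmod a * cmod b"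
    using assms by (simp add: power2_eq_square field_simps)
  finally have "cmod (a * b) \<le> t / 2 * (cmod a)\<^sup>2 + (cmod b)\<^sup>2 / (2 * t)"
    by (simp add: norm_mult)
  then show ?thesis using complex_Re_le_cmod order_trans by blast
qed

lemma Re_tr_prod_le:
  assumes "0 < t"
  shows "Re (tr_prod n A C) \<le> t / 2 * hs_norm_sq n A + hs_norm_sq n C / (2 * t)"
proof -
  have hsC: "hs_norm_sq n C = (\<Sum>i<n. \<Sum>j<n. (cmod (C j i))\<^sup>2)"
    unfolding hs_norm_sq_def by (rule sum.swap)
  have "Re (tr_prod n A C) \<le> (\<Sum>i<n. \<Sum>j<n. t / 2 * (cmod (A i j))\<^sup>2 + (cmod (C j i))\<^sup>2 / (2 * t))"
    unfolding tr_prod_def Re_sum by (intro sum_mono Re_mult_le_weighted assms)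
  also have "\<dots> = t / 2 * hs_norm_sq n A + hs_norm_sq n C / (2 * t)"
    unfolding hsC unfolding hs_norm_sq_def
    by (simp add: sum.distrib sum_distrib_left sum_divide_distrib)
  finally show ?thesis .
qed

lemma density_fun_tr_prod_diff_le:
  assumes "density_fun n A" "density_fun n B" "0 < t"
  shows "Re (tr_prod n (\<lambda>i j. A i j - B i j) C) \<le> t + hs_norm_sq n C / (2 * t)"
proof -
  have "t / 2 * hs_norm_sq n (\<lambda>i j. A i j - B i j) \<le> t / 2 * 2"
    using density_fun_hs_dist_le[OF assms(1,2)] assms(3) by (intro mult_left_mono) auto
  then show ?thesis using Re_tr_prod_le[OF assms(3), of n "\<lambda>i j. A i j - B i j" C] by simp
qed

section \<open>Measurements and local channels\<close>

lemma index_mult_mat_sum: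
  assumes "A \<in> carrier_mat n n" "B \<in> carrier_mat n n" "i < n" "j < n"
  shows "(A * B) $$ (i, j) = (\<Sum>k<n. A $$ (i, k) * B $$ (k, j))"
  using assms by (simp add: scalar_prod_def lessThan_atLeast0)

lemma mtrace_mult:
  assumes "A \<in> carrier_mat n n" "B \<in> carrier_mat n n"
  shows "mtrace (A * B) = tr_prod n (\<lambda>i j. A $$ (i, j)) (\<lambda>i j. B $$ (i, j))"
proof -
  have "mtrace (A * B) = (\<Sum>i<n. (A * B) $$ (i, i))" unfolding mtrace_def using assms by simp
  also have "\<dots> = tr_prod n (\<lambda>i j. A $$ (i, j)) (\<lambda>i j. B $$ (i, j))"
    unfolding tr_prod_def by (intro sum.cong refl index_mult_mat_sum[OF assms]) auto
  finally show ?thesis .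
qed

definition binary_observable :: "complex mat \<Rightarrow> nat \<Rightarrow> nat \<Rightarrow> complex" where
  "binary_observable P i j = 2 * P $$ (i, j) - (if i = j then 1 else 0)"

lemma hs_norm_sq_binary_observable:
  assumes P: "projector n P"
  shows "hs_norm_sq n (binary_observable P) = n"
proof -
  have car: "P \<in> carrier_mat n n" and idem: "P * P = P"
    and herm: "\<And>i j. i < n \<Longrightarrow> j < n \<Longrightarrow> P $$ (i, j) = cnj (P $$ (j, i))"
    using P unfolding projector_def hermitian_n_def by blast+
  have row: "(\<Sum>j<n. binary_observable P i j * binary_observable P j i) = 1" if i: "i < n" for i
  proof -
    have "(\<Sum>j<n. P $$ (i, j) * P $$ (j, i)) = P $$ (i, i)"
      using index_mult_mat_sum[OF car car i i] idem by simp
    then show ?thesis using i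
      by (simp add: binary_observable_def algebra_simps sum.distrib sum_subtractf
          mult_if_zero_left mult_if_zero_right flip: sum_distrib_left)
  qed
  have "hs_norm_sq n (binary_observable P) = Re (tr_prod n (binary_observable P) (binary_observable P))"
  proof (rule hs_norm_sq_hermitian)
    fix i j assume "i < n" "j < n"
    then show "binary_observable P i j = cnj (binary_observable P j i)"
      using herm[of i j] by (simp add: binary_observable_def)
  qed
  also have "\<dots> = n" unfolding tr_prod_def by (simp add: row)
  finally show ?thesis .
qed

definition bit_sign :: "bool \<Rightarrow> real" where
  "bit_sign b = (if b then -1 else 1)"

lemma Re_mtrace_proj_meas:
  assumes \<sigma>: "\<sigma> \<in> carrier_mat n n" and tr: "mtrace \<sigma> = 1" and P: "proj_meas n P"
  shows "Re (mtrace (\<sigma> * P b))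
    = 1/2 + bit_sign b / 2 * Re (tr_prod n (\<lambda>i j. \<sigma> $$ (i, j)) (binary_observable (P False)))"
proof -
  have PF: "P False \<in> carrier_mat n n" and PT: "P True \<in> carrier_mat n n"
    and sum: "P False + P True = 1\<^sub>m n"
    using P unfolding proj_meas_def projector_def hermitian_n_def by blast+
  have entry:
    "P b $$ (i, j) = 1/2 * ((if i = j then 1 else 0) + bit_sign b * binary_observable (P False) i j)"
    if "i < n" "j < n" for i j
  proof -
    have "P False $$ (i, j) + P True $$ (i, j) = (if i = j then 1 else 0)"
      using arg_cong[OF sum, of "\<lambda>A. A $$ (i, j)"] PF PT that by simp
    then have PT_entry: "P True $$ (i, j) = (if i = j then 1 else 0) - P False $$ (i, j)"
      by (simp add: eq_diff_eq add.commute)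
    show ?thesis by (cases b) (simp_all add: PT_entry bit_sign_def binary_observable_def field_simps)
  qed
  have "mtrace (\<sigma> * P b) = tr_prod n (\<lambda>i j. \<sigma> $$ (i, j)) (\<lambda>i j. P b $$ (i, j))"
    using \<sigma> PF PT by (cases b) (simp_all add: mtrace_mult)
  also have "\<dots> = 1/2 * (mtrace \<sigma> + bit_sign b * tr_prod n (\<lambda>i j. \<sigma> $$ (i, j)) (binary_observable (P False)))"
  proof -
    have "tr_prod n (\<lambda>i j. \<sigma> $$ (i, j)) (\<lambda>i j. P b $$ (i, j)) = tr_prod n (\<lambda>i j. \<sigma> $$ (i, j))
        (\<lambda>i j. 1/2 * ((if i = j then 1 else 0) + bit_sign b * binary_observable (P False) i j))"
      by (rule tr_prod_cong) (rule entry)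
    then show ?thesis using \<sigma>
      by (simp only: tr_prod_scale_right tr_prod_add_right tr_prod_identity_right) (simp add: mtrace_def)
  qed
  finally have eq: "mtrace (\<sigma> * P b)
      = 1/2 * (mtrace \<sigma> + bit_sign b * tr_prod n (\<lambda>i j. \<sigma> $$ (i, j)) (binary_observable (P False)))" .
  show ?thesis unfolding eq tr by simp
qed

definition qubit_block :: "complex mat \<Rightarrow> nat \<Rightarrow> nat \<Rightarrow> nat \<Rightarrow> complex mat" where
  "qubit_block M k a b = mat 2 2 (\<lambda>(i, j). M $$ (i * k + a, j * k + b))"

lemma dim_ampl [simp]: "dim_row (ampl \<Lambda> k M) = 2 * k" "dim_col (ampl \<Lambda> k M) = 2 * k"
  unfolding ampl_def by simp_all

lemma index_ampl:
  assumes "r < 2 * k" "s < 2 * k"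
  shows "ampl \<Lambda> k M $$ (r, s) = \<Lambda> (qubit_block M k (r mod k) (s mod k)) $$ (r div k, s div k)"
  using assms unfolding ampl_def qubit_block_def by simp

lemma sum_lessThan_double: "(\<Sum>r<2 * (k::nat). f r) = (\<Sum>a<k. f a) + (\<Sum>a<k. f (k + a))"
proof -
  have "(\<Sum>r<2 * k. f r) = (\<Sum>r\<in>{0..<k}. f r) + (\<Sum>r\<in>{k..<k + k}. f r)"
    by (simp add: sum.atLeastLessThan_concat lessThan_atLeast0 mult_2)
  also have "(\<Sum>r\<in>{k..<k + k}. f r) = (\<Sum>a<k. f (k + a))"
    using sum.shift_bounds_nat_ivl[of f 0 k k] by (simp add: lessThan_atLeast0 add.commute)
  finally show ?thesis by (simp add: lessThan_atLeast0)
qed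

lemma mtrace_ampl:
  assumes lin: "qubit_linear \<Lambda>" and tp: "trace_preserving \<Lambda>" and M: "M \<in> carrier_mat (2 * k) (2 * k)"
  shows "mtrace (ampl \<Lambda> k M) = mtrace M"
proof -
  have block: "qubit_block M k a a \<in> carrier_mat 2 2" for a
    unfolding qubit_block_def by simp
  have "mtrace (ampl \<Lambda> k M) = (\<Sum>r<2 * k. ampl \<Lambda> k M $$ (r, r))"
    unfolding mtrace_def by (simp add: ampl_def)
  also have "\<dots> = (\<Sum>a<k. \<Lambda> (qubit_block M k a a) $$ (0, 0) + \<Lambda> (qubit_block M k a a) $$ (1, 1))"
    by (simp add: sum_lessThan_double index_ampl sum.distrib)
  also have "\<dots> = (\<Sum>a<k. mtrace (\<Lambda> (qubit_block M k a a)))"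
  proof -
    have "dim_row (\<Lambda> (qubit_block M k a a)) = 2" for a
      using lin block unfolding qubit_linear_def by (metis carrier_matD(1))
    then show ?thesis unfolding mtrace_def by (simp add: numeral_2_eq_2)
  qed
  also have "\<dots> = (\<Sum>a<k. mtrace (qubit_block M k a a))"
    using tp block unfolding trace_preserving_def by simp
  also have "\<dots> = (\<Sum>a<k. M $$ (a, a) + M $$ (k + a, k + a))"
    unfolding mtrace_def qubit_block_def by (simp add: numeral_2_eq_2 add.commute)
  also have "\<dots> = mtrace M"
    unfolding mtrace_def using M by (simp add: sum_lessThan_double sum.distrib)
  finally show ?thesis .
qed

lemma density_fun_ampl:
  assumes M: "density (2 * k) M" and \<Lambda>: "cptp \<Lambda>"
  shows "density_fun (2 * k) (\<lambda>i j. ampl \<Lambda> k M $$ (i, j))"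
proof -
  have "psd (2 * k) M" and tr: "mtrace M = 1" using M unfolding density_def by auto
  then have "psd (2 * k) (ampl \<Lambda> k M)"
    using \<Lambda> unfolding cptp_def completely_positive_def by blast
  moreover have "M \<in> carrier_mat (2 * k) (2 * k)"
    using \<open>psd (2 * k) M\<close> unfolding psd_def hermitian_n_def by blast
  then have "mtrace (ampl \<Lambda> k M) = 1"
    using \<Lambda> tr mtrace_ampl unfolding cptp_def by metis
  then have "(\<Sum>i<2 * k. Re (ampl \<Lambda> k M $$ (i, i))) = 1"
    unfolding mtrace_def by (simp flip: Re_sum)
  ultimately show ?thesis unfolding density_fun_def psd_iff_psd_fun by simp
qed

section \<open>The upper bound\<close>

definition rac_bias ::
    "nat \<Rightarrow> (bool list \<Rightarrow> nat \<Rightarrow> nat \<Rightarrow> complex) \<Rightarrow> (nat \<Rightarrow> nat \<Rightarrow> nat \<Rightarrow> complex) \<Rightarrow> real" where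
  "rac_bias d \<sigma> obs =
    (\<Sum>x\<in>{xs. length xs = 3}. \<Sum>y\<in>{1..3}. bit_sign (x ! (y - 1)) * Re (tr_prod d (\<sigma> x) (obs y)))"

lemma sum_bool_lists_3:
  "(\<Sum>x\<in>{xs :: bool list. length xs = 3}. f x)
    = (\<Sum>b\<in>UNIV. \<Sum>c\<in>UNIV. f [False, b, c] + f [True, \<not> b, \<not> c])"
proof -
  have "{xs :: bool list. length xs = 3} = {[a, b, c] | a b c. True}"
    by (auto simp: numeral_3_eq_3 length_Suc_conv)
  also have "\<dots> = {[False, False, False], [False, False, True], [False, True, False], [False, True, True],
      [True, False, False], [True, False, True], [True, True, False], [True, True, True]}"
    by auto
  finally show ?thesis by (simp add: UNIV_bool add_ac)
qed

lemma sum_1_to_3: "(\<Sum>y\<in>{1..3::nat}. g y) = g 1 + g 2 + g 3"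
proof -
  have "{1..3::nat} = {1, 2, 3}" by auto
  then show ?thesis by (simp add: add_ac)
qed

lemma rac_bias_complementary_pairs:
  fixes \<sigma> :: "bool list \<Rightarrow> nat \<Rightarrow> nat \<Rightarrow> complex" and obs :: "nat \<Rightarrow> nat \<Rightarrow> nat \<Rightarrow> complex"
  shows "rac_bias d \<sigma> obs = (\<Sum>b\<in>UNIV. \<Sum>c\<in>UNIV.
      Re (tr_prod d (\<lambda>i j. \<sigma> [False, b, c] i j - \<sigma> [True, \<not> b, \<not> c] i j)
        (\<lambda>i j. obs 1 i j + of_real (bit_sign b) * obs 2 i j + of_real (bit_sign c) * obs 3 i j)))"
  unfolding rac_bias_def sum_bool_lists_3 sum_1_to_3
  by (simp add: UNIV_bool tr_prod_diff_left tr_prod_add_right tr_prod_scale_right bit_sign_def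
      algebra_simps)

lemma hs_norm_sq_sign_combinations:
  fixes A B C :: "nat \<Rightarrow> nat \<Rightarrow> complex"
  shows "(\<Sum>b\<in>UNIV. \<Sum>c\<in>UNIV.
      hs_norm_sq n (\<lambda>i j. A i j + of_real (bit_sign b) * B i j + of_real (bit_sign c) * C i j))
    = 4 * (hs_norm_sq n A + hs_norm_sq n B + hs_norm_sq n C)"
proof -
  have "(cmod (a + b + c))\<^sup>2 + (cmod (a + b - c))\<^sup>2 + ((cmod (a - b + c))\<^sup>2 + (cmod (a - b - c))\<^sup>2)
      = 4 * (cmod a)\<^sup>2 + 4 * (cmod b)\<^sup>2 + 4 * (cmod c)\<^sup>2" for a b c :: complex
    unfolding cmod_power2 by (simp add: power2_eq_square algebra_simps)
  then show ?thesis
    unfolding hs_norm_sq_def by (simp add: UNIV_bool bit_sign_def sum_distrib_left flip: sum.distrib)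
qed

lemma rac_bias_le:
  assumes states: "\<And>x. length x = 3 \<Longrightarrow> density_fun d (\<sigma> x)"
    and obs: "\<And>y. y \<in> {1..3} \<Longrightarrow> hs_norm_sq d (obs y) = d"
    and t: "0 < t"
  shows "rac_bias d \<sigma> obs \<le> 4 * t + 6 * real d / t"
proof -
  let ?C = "\<lambda>b c i j. obs 1 i j + of_real (bit_sign b) * obs 2 i j + of_real (bit_sign c) * obs 3 i j"
  have "rac_bias d \<sigma> obs = (\<Sum>b\<in>UNIV. \<Sum>c\<in>UNIV.
      Re (tr_prod d (\<lambda>i j. \<sigma> [False, b, c] i j - \<sigma> [True, \<not> b, \<not> c] i j) (?C b c)))"
    by (rule rac_bias_complementary_pairs)
  also have "\<dots> \<le> (\<Sum>b\<in>UNIV. \<Sum>c\<in>UNIV. t + hs_norm_sq d (?C b c) / (2 * t))"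
    by (intro sum_mono density_fun_tr_prod_diff_le states t) auto
  also have "\<dots> = 4 * t + (\<Sum>b\<in>UNIV. \<Sum>c\<in>UNIV. hs_norm_sq d (?C b c)) / (2 * t)"
    by (simp add: UNIV_bool add_divide_distrib)
  also have "\<dots> = 4 * t + 6 * real d / t"
    unfolding hs_norm_sq_sign_combinations using obs t by simp
  finally show ?thesis .
qed

definition output_state ::
    "complex mat \<Rightarrow> (bool list \<Rightarrow> complex mat \<Rightarrow> complex mat) \<Rightarrow> bool list \<Rightarrow> nat \<Rightarrow> nat \<Rightarrow> complex" where
  "output_state \<rho> \<Lambda> x = (\<lambda>i j. ampl (\<Lambda> x) 2 \<rho> $$ (i, j))"

definition measured_observable :: "(nat \<Rightarrow> bool \<Rightarrow> complex mat) \<Rightarrow> nat \<Rightarrow> nat \<Rightarrow> nat \<Rightarrow> complex" where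
  "measured_observable Pm y = binary_observable (Pm y False)"

lemma output_state_density:
  assumes "valid_strategy \<rho> \<Lambda> Pm" "length x = 3"
  shows "density_fun 4 (output_state \<rho> \<Lambda> x)"
  using density_fun_ampl[of 2 \<rho> "\<Lambda> x"] assms unfolding valid_strategy_def output_state_def
  by simp

lemma success_eq_rac_bias:
  assumes "valid_strategy \<rho> \<Lambda> Pm"
  shows "success \<rho> \<Lambda> Pm = 1/2 + rac_bias 4 (output_state \<rho> \<Lambda>) (measured_observable Pm) / 48"
proof -
  have \<rho>: "density 4 \<rho>" and \<Lambda>: "\<And>x. length x = 3 \<Longrightarrow> cptp (\<Lambda> x)"
    and Pm: "\<And>y. y \<in> {1..3} \<Longrightarrow> proj_meas 4 (Pm y)"
    using assms unfolding valid_strategy_def by auto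
  have outcome: "Re (mtrace (ampl (\<Lambda> x) 2 \<rho> * Pm y b)) = 1/2 + bit_sign b / 2
      * Re (tr_prod 4 (output_state \<rho> \<Lambda> x) (measured_observable Pm y))"
    if x: "length x = 3" and y: "y \<in> {1..3}" for x y b
  proof -
    have "\<rho> \<in> carrier_mat (2 * 2) (2 * 2)" and "mtrace \<rho> = 1"
      using \<rho> unfolding density_def psd_def hermitian_n_def by auto
    then have "mtrace (ampl (\<Lambda> x) 2 \<rho>) = 1"
      using mtrace_ampl \<Lambda>[OF x] unfolding cptp_def by metis
    then show ?thesis
      using Re_mtrace_proj_meas[of "ampl (\<Lambda> x) 2 \<rho>" 4, OF _ _ Pm[OF y]]
      by (simp add: output_state_def measured_observable_def carrier_matI)
  qed
  have "success \<rho> \<Lambda> Pm = 1/24 * (\<Sum>y\<in>{1..3}. \<Sum>x\<in>{xs. length xs = 3}.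
      1/2 + bit_sign (x ! (y - 1)) / 2 * Re (tr_prod 4 (output_state \<rho> \<Lambda> x) (measured_observable Pm y)))"
    unfolding success_def by (intro arg_cong[where f = "\<lambda>s. 1/24 * s"] sum.cong refl outcome) auto
  also have "\<dots> = 1/2 + rac_bias 4 (output_state \<rho> \<Lambda>) (measured_observable Pm) / 48"
    unfolding rac_bias_def sum_1_to_3 sum_bool_lists_3 by (simp add: UNIV_bool)
  finally show ?thesis .
qed

lemma success_le:
  assumes "valid_strategy \<rho> \<Lambda> Pm"
  shows "success \<rho> \<Lambda> Pm \<le> 1/2 + 1 / sqrt 6"
proof -
  have "rac_bias 4 (output_state \<rho> \<Lambda>) (measured_observable Pm) \<le> 4 * sqrt 6 + 6 * real 4 / sqrt 6"
  proof (rule rac_bias_le)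
    fix y :: nat assume "y \<in> {1..3}"
    then have "projector 4 (Pm y False)" using assms unfolding valid_strategy_def proj_meas_def by blast
    then show "hs_norm_sq 4 (measured_observable Pm y) = real 4"
      unfolding measured_observable_def by (rule hs_norm_sq_binary_observable)
  qed (simp_all add: output_state_density[OF assms])
  also have "4 * sqrt 6 + 6 * real 4 / sqrt 6 = 48 / sqrt 6"
    by (simp add: field_simps)
  finally show ?thesis using success_eq_rac_bias[OF assms] by simp
qed

section \<open>Unitary channels and involutive observables\<close>

definition unitary_channel :: "(nat \<Rightarrow> nat \<Rightarrow> complex) \<Rightarrow> complex mat \<Rightarrow> complex mat" where
  "unitary_channel U A = mat 2 2 (\<lambda>(i, j). \<Sum>a<2. \<Sum>b<2. U i a * A $$ (a, b) * cnj (U j b))"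

(* The matrix of U (x) 1_k in the basis ordering of ampl, where |i> (x) |a> has index i * k + a. *)
definition tensor_id :: "(nat \<Rightarrow> nat \<Rightarrow> complex) \<Rightarrow> nat \<Rightarrow> nat \<Rightarrow> nat \<Rightarrow> complex" where
  "tensor_id U k r p = (if p mod k = r mod k then U (r div k) (p div k) else 0)"

lemma sum_tensor_index:
  fixes X g :: "nat \<Rightarrow> 'a::semiring_0"
  assumes "c < (k::nat)"
  shows "(\<Sum>p<2 * k. (if p mod k = c then X (p div k) else 0) * g p) = (\<Sum>a<2. X a * g (a * k + c))"
  unfolding sum_lessThan_double using assms by (simp add: mult_if_zero_left numeral_2_eq_2)

lemma index_ampl_unitary_channel:
  assumes r: "r < 2 * k" and s: "s < 2 * k"
  shows "ampl (unitary_channel U) k M $$ (r, s)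
    = (\<Sum>p<2 * k. \<Sum>q<2 * k. tensor_id U k r p * M $$ (p, q) * cnj (tensor_id U k s q))"
proof -
  have k: "r mod k < k" "s mod k < k" "r div k < 2" "s div k < 2"
    using r s by (auto simp: less_mult_imp_div_less mult.commute)
  have "(\<Sum>p<2 * k. \<Sum>q<2 * k. tensor_id U k r p * M $$ (p, q) * cnj (tensor_id U k s q))
      = (\<Sum>p<2 * k. (if p mod k = r mod k then U (r div k) (p div k) else 0) *
          (\<Sum>q<2 * k. (if q mod k = s mod k then cnj (U (s div k) (q div k)) else 0) * M $$ (p, q)))"
    unfolding tensor_id_def
    by (intro sum.cong refl) (auto simp: sum_distrib_left mult_ac if_distrib[of cnj] cong: if_cong)
  also have "\<dots> = (\<Sum>a<2. U (r div k) a *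
      (\<Sum>b<2. cnj (U (s div k) b) * M $$ (a * k + r mod k, b * k + s mod k)))"
    unfolding sum_tensor_index[OF k(2), of "\<lambda>b. cnj (U (s div k) b)"]
    by (rule sum_tensor_index[OF k(1)])
  also have "\<dots> = (\<Sum>a<2. \<Sum>b<2.
      U (r div k) a * M $$ (a * k + r mod k, b * k + s mod k) * cnj (U (s div k) b))"
    by (simp add: sum_distrib_left mult_ac)
  also have "\<dots> = ampl (unitary_channel U) k M $$ (r, s)"
    using k by (simp add: index_ampl[OF r s] unitary_channel_def qubit_block_def)
  finally show ?thesis ..
qed

lemma completely_positive_unitary_channel: "completely_positive (unitary_channel U)"
  unfolding completely_positive_def
proof (intro allI impI)
  fix k M assume "psd (2 * k) M"
  then have "psd_fun (2 * k)
      (\<lambda>r s. \<Sum>p<2 * k. \<Sum>q<2 * k. tensor_id U k r p * M $$ (p, q) * cnj (tensor_id U k s q))"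
    unfolding psd_iff_psd_fun by (intro psd_fun_congruence) simp
  then show "psd (2 * k) (ampl (unitary_channel U) k M)"
    unfolding psd_iff_psd_fun by (simp add: carrier_matI psd_fun_cong[OF index_ampl_unitary_channel])
qed

lemma qubit_linear_unitary_channel: "qubit_linear (unitary_channel U)"
  unfolding qubit_linear_def
proof (intro conjI ballI allI)
  fix A :: "complex mat" assume "A \<in> carrier_mat 2 2"
  show "unitary_channel U A \<in> carrier_mat 2 2" unfolding unitary_channel_def by simp
next
  fix A B :: "complex mat" assume "A \<in> carrier_mat 2 2" "B \<in> carrier_mat 2 2"
  then show "unitary_channel U (A + B) = unitary_channel U A + unitary_channel U B"
    unfolding unitary_channel_def
    by (intro eq_matI) (auto simp: numeral_2_eq_2 lessThan_Suc algebra_simps)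
next
  fix A :: "complex mat" and c assume "A \<in> carrier_mat 2 2"
  then show "unitary_channel U (c \<cdot>\<^sub>m A) = c \<cdot>\<^sub>m unitary_channel U A"
    unfolding unitary_channel_def
    by (intro eq_matI) (auto simp: numeral_2_eq_2 lessThan_Suc algebra_simps)
qed

definition unitary2 :: "(nat \<Rightarrow> nat \<Rightarrow> complex) \<Rightarrow> bool" where
  "unitary2 U \<longleftrightarrow> (\<forall>a<2. \<forall>b<2. (\<Sum>i<2. U i a * cnj (U i b)) = (if a = b then 1 else 0))"

lemma trace_preserving_unitary_channel:
  assumes "unitary2 U"
  shows "trace_preserving (unitary_channel U)"
  unfolding trace_preserving_def
proof
  fix A :: "complex mat" assume A: "A \<in> carrier_mat 2 2"
  have col: "U 0 a * cnj (U 0 b) + U 1 a * cnj (U 1 b) = (if a = b then 1 else 0)"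
    if "a < 2" "b < 2" for a b
    using assms that unfolding unitary2_def by (simp add: numeral_2_eq_2)
  have "mtrace (unitary_channel U A) = A $$ (0, 0) * (U 0 0 * cnj (U 0 0) + U 1 0 * cnj (U 1 0))
      + A $$ (0, 1) * (U 0 0 * cnj (U 0 1) + U 1 0 * cnj (U 1 1))
      + A $$ (1, 0) * (U 0 1 * cnj (U 0 0) + U 1 1 * cnj (U 1 0))
      + A $$ (1, 1) * (U 0 1 * cnj (U 0 1) + U 1 1 * cnj (U 1 1))"
    unfolding mtrace_def unitary_channel_def by (simp add: numeral_2_eq_2 algebra_simps)
  also have "\<dots> = mtrace A"
    unfolding mtrace_def using A col[of 0 0] col[of 0 1] col[of 1 0] col[of 1 1]
    by (simp add: numeral_2_eq_2)
  finally show "mtrace (unitary_channel U A) = mtrace A" .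
qed

lemma cptp_unitary_channel: "unitary2 U \<Longrightarrow> cptp (unitary_channel U)"
  unfolding cptp_def
  using qubit_linear_unitary_channel completely_positive_unitary_channel trace_preserving_unitary_channel
  by blast

definition meas_of_involution :: "nat \<Rightarrow> (nat \<Rightarrow> nat \<Rightarrow> complex) \<Rightarrow> bool \<Rightarrow> complex mat" where
  "meas_of_involution n X b =
    mat n n (\<lambda>(i, j). ((if i = j then 1 else 0) + of_real (bit_sign b) * X i j) / 2)"

lemma meas_of_involution_idem:
  assumes inv: "\<And>i j. i < n \<Longrightarrow> j < n \<Longrightarrow> (\<Sum>k<n. X i k * X k j) = (if i = j then 1 else 0)"
  shows "meas_of_involution n X b * meas_of_involution n X b = meas_of_involution n X b"
proof (rule eq_matI)
  let ?P = "meas_of_involution n X b"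
  let ?s = "of_real (bit_sign b) :: complex"
  fix i j assume "i < dim_row ?P" "j < dim_col ?P"
  then have i: "i < n" and j: "j < n" by (simp_all add: meas_of_involution_def)
  have car: "?P \<in> carrier_mat n n" by (simp add: meas_of_involution_def)
  have "(?P * ?P) $$ (i, j) = (\<Sum>k<n. ?P $$ (i, k) * ?P $$ (k, j))"
    by (rule index_mult_mat_sum[OF car car i j])
  also have "\<dots> = (\<Sum>k<n. ((if i = k then 1 else 0) + ?s * X i k) * ((if k = j then 1 else 0) + ?s * X k j))
      / 4"
    using i j by (simp add: meas_of_involution_def sum_divide_distrib)
  also have "\<dots> = ((if i = j then 1 else 0) + 2 * ?s * X i j + ?s\<^sup>2 * (\<Sum>k<n. X i k * X k j)) / 4"
    using i j by (simp add: algebra_simps sum.distrib sum_distrib_left mult_if_zero_left mult_if_zero_right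
        power2_eq_square)
  also have "\<dots> = ?P $$ (i, j)"
    unfolding inv[OF i j] using i j by (simp add: meas_of_involution_def bit_sign_def field_simps)
  finally show "(?P * ?P) $$ (i, j) = ?P $$ (i, j)" .
qed (simp_all add: meas_of_involution_def)

lemma proj_meas_of_involution:
  assumes herm: "\<And>i j. i < n \<Longrightarrow> j < n \<Longrightarrow> X i j = cnj (X j i)"
    and inv: "\<And>i j. i < n \<Longrightarrow> j < n \<Longrightarrow> (\<Sum>k<n. X i k * X k j) = (if i = j then 1 else 0)"
  shows "proj_meas n (meas_of_involution n X)"
proof -
  have "hermitian_n n (meas_of_involution n X b)" for b
    unfolding hermitian_n_def
  proof (intro conjI allI impI)
    fix i j assume "i < n" "j < n"
    then show "meas_of_involution n X b $$ (i, j) = cnj (meas_of_involution n X b $$ (j, i))"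
      using herm[of i j] by (simp add: meas_of_involution_def bit_sign_def)
  qed (simp add: meas_of_involution_def)
  moreover have "meas_of_involution n X False + meas_of_involution n X True = 1\<^sub>m n"
    by (rule eq_matI) (auto simp: meas_of_involution_def bit_sign_def field_simps)
  ultimately show ?thesis
    unfolding proj_meas_def projector_def using meas_of_involution_idem[OF inv] by blast
qed

lemma binary_observable_meas_of_involution:
  "i < n \<Longrightarrow> j < n \<Longrightarrow> binary_observable (meas_of_involution n X False) i j = X i j"
  by (simp add: binary_observable_def meas_of_involution_def bit_sign_def field_simps)

section \<open>An optimal strategy\<close>

lemma sum_lessThan_2: "(\<Sum>i<2::nat. f i) = f 0 + f 1"
  by (simp add: eval_nat_numeral)

lemma sum_lessThan_4: "(\<Sum>i<4::nat. f i) = f 0 + f 1 + f 2 + f 3"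
  by (simp add: eval_nat_numeral add_ac)

definition phi_plus :: "complex mat" where
  "phi_plus = mat 4 4 (\<lambda>(i, j). if (i = 0 \<or> i = 3) \<and> (j = 0 \<or> j = 3) then 1/2 else 0)"

lemma density_phi_plus: "density 4 phi_plus"
proof -
  have "0 \<le> Re (quad_form 4 (\<lambda>i j. phi_plus $$ (i, j)) v)" for v
  proof -
    have eq: "quad_form 4 (\<lambda>i j. phi_plus $$ (i, j)) v = (v 0 + v 3) * cnj (v 0 + v 3) / 2"
      unfolding quad_form_def phi_plus_def by (simp add: sum_lessThan_4 algebra_simps)
    show ?thesis unfolding eq complex_mult_cnj by simp
  qed
  then have "psd_fun 4 (\<lambda>i j. phi_plus $$ (i, j))"
    unfolding psd_fun_def by (simp add: phi_plus_def)
  moreover have "mtrace phi_plus = 1"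
    unfolding mtrace_def phi_plus_def by (simp add: sum_lessThan_4)
  ultimately show ?thesis
    unfolding density_def psd_iff_psd_fun by (simp add: phi_plus_def)
qed

lemma index_ampl_phi_plus:
  assumes "r < 4" "s < 4"
  shows "ampl (unitary_channel U) 2 phi_plus $$ (r, s)
    = 1/2 * U (r div 2) (r mod 2) * cnj (U (s div 2) (s mod 2))"
proof -
  have "r < 2 * 2" "s < 2 * 2" using assms by simp_all
  moreover have "r \<in> {0, 1, 2, 3}" "s \<in> {0, 1, 2, 3}" using assms by auto
  ultimately show ?thesis
    by (auto simp: index_ampl unitary_channel_def qubit_block_def phi_plus_def sum_lessThan_2)
qed

lemma tr_prod_phi_plus:
  "tr_prod 4 (\<lambda>i j. ampl (unitary_channel U) 2 phi_plus $$ (i, j)) X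
    = 1/2 * quad_form 4 X (\<lambda>r. U (r div 2) (r mod 2))"
proof -
  have "tr_prod 4 (\<lambda>i j. ampl (unitary_channel U) 2 phi_plus $$ (i, j)) X
      = (\<Sum>r<4. \<Sum>s<4. 1/2 * U (r div 2) (r mod 2) * cnj (U (s div 2) (s mod 2)) * X s r)"
    unfolding tr_prod_def by (intro sum.cong refl) (simp add: index_ampl_phi_plus)
  also have "\<dots> = 1/2 * quad_form 4 X (\<lambda>r. U (r div 2) (r mod 2))"
    unfolding quad_form_def by (subst sum.swap) (simp add: sum_distrib_left mult_ac)
  finally show ?thesis .
qed

(* K_y = P_y (x) (n_y . sigma) for the Pauli matrices, with (P_1, P_2, P_3) = (X, -Y, Z) and
   n_1 = (2, 1, -1), n_2 = (1, 2, 1), n_3 = (-1, 1, 2); hence K_y^2 = |n_y|^2 = 6. *)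
definition bob_matrix :: "nat \<Rightarrow> nat \<Rightarrow> nat \<Rightarrow> complex" where
  "bob_matrix y i j =
    (if y = 1 then
       [[0, 0, -1, Complex 2 (-1)],
        [0, 0, Complex 2 1, 1],
        [-1, Complex 2 (-1), 0, 0],
        [Complex 2 1, 1, 0, 0]]
     else if y = 2 then
       [[0, 0, \<i>, Complex 2 1],
        [0, 0, Complex (-2) 1, - \<i>],
        [- \<i>, Complex (-2) (-1), 0, 0],
        [Complex 2 (-1), \<i>, 0, 0]]
     else
       [[2, Complex (-1) (-1), 0, 0],
        [Complex (-1) 1, -2, 0, 0],
        [0, 0, -2, Complex 1 1],
        [0, 0, Complex 1 (-1), 2]]) ! i ! j"

lemma bob_matrix_sq:
  "y \<in> {1, 2, 3} \<Longrightarrow> i < 4 \<Longrightarrow> j < 4 \<Longrightarrow>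
    (\<Sum>k<4. bob_matrix y i k * bob_matrix y k j) = (if i = j then 6 else 0)"
  by (auto simp: bob_matrix_def sum_lessThan_4 complex_eq_iff less_Suc_eq numeral_eq_Suc)

lemma bob_matrix_hermitian:
  "y \<in> {1, 2, 3} \<Longrightarrow> i < 4 \<Longrightarrow> j < 4 \<Longrightarrow> bob_matrix y i j = cnj (bob_matrix y j i)"
  by (auto simp: bob_matrix_def complex_eq_iff less_Suc_eq numeral_eq_Suc)

definition bob_meas :: "nat \<Rightarrow> bool \<Rightarrow> complex mat" where
  "bob_meas y = meas_of_involution 4 (\<lambda>i j. of_real (1 / sqrt 6) * bob_matrix y i j)"

lemma proj_meas_bob_meas:
  assumes y: "y \<in> {1, 2, 3}"
  shows "proj_meas 4 (bob_meas y)"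
  unfolding bob_meas_def
proof (rule proj_meas_of_involution)
  fix i j :: nat assume ij: "i < 4" "j < 4"
  show "of_real (1 / sqrt 6) * bob_matrix y i j = cnj (of_real (1 / sqrt 6) * bob_matrix y j i)"
    using bob_matrix_hermitian[OF y ij] by simp
  have "(\<Sum>k<4. of_real (1 / sqrt 6) * bob_matrix y i k * (of_real (1 / sqrt 6) * bob_matrix y k j))
      = (\<Sum>k<4. bob_matrix y i k * bob_matrix y k j) / 6"
  proof -
    have "complex_of_real (sqrt 6) * complex_of_real (sqrt 6) = 6" by (simp flip: of_real_mult)
    then show ?thesis by (simp add: sum_divide_distrib mult_ac)
  qed
  also have "\<dots> = (if i = j then 1 else 0)"
    using bob_matrix_sq[OF y ij] by simp
  finally show "(\<Sum>k<4. of_real (1 / sqrt 6) * bob_matrix y i k * (of_real (1 / sqrt 6) * bob_matrix y k j))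
      = (if i = j then 1 else 0)" .
qed

definition quat_mat :: "real \<Rightarrow> real \<Rightarrow> real \<Rightarrow> real \<Rightarrow> nat \<Rightarrow> nat \<Rightarrow> complex" where
  "quat_mat a b c d i j = (if i = 0 then (if j = 0 then Complex a d else Complex c b)
                           else (if j = 0 then Complex (-c) b else Complex a (-d)))"

definition quat_unitary :: "real \<Rightarrow> real \<Rightarrow> real \<Rightarrow> real \<Rightarrow> nat \<Rightarrow> nat \<Rightarrow> complex" where
  "quat_unitary a b c d i j = of_real (1 / sqrt (a\<^sup>2 + b\<^sup>2 + c\<^sup>2 + d\<^sup>2)) * quat_mat a b c d i j"

lemma unitary2_quat_unitary:
  assumes "a\<^sup>2 + b\<^sup>2 + c\<^sup>2 + d\<^sup>2 \<noteq> 0"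
  shows "unitary2 (quat_unitary a b c d)"
  unfolding unitary2_def
proof (intro allI impI)
  define N where "N = a\<^sup>2 + b\<^sup>2 + c\<^sup>2 + d\<^sup>2"
  have N: "0 < N" using assms unfolding N_def by (simp add: order_less_le)
  have sqrtN: "complex_of_real (sqrt N) * complex_of_real (sqrt N) = of_real N"
    using N by (simp flip: of_real_mult)
  have sumN: "of_real a * of_real a + of_real b * of_real b + of_real c * of_real c + of_real d * of_real d
      = (of_real N :: complex)"
    unfolding N_def by (simp add: power2_eq_square)
  fix i j :: nat assume "i < 2" "j < 2"
  then have "i \<in> {0, 1}" "j \<in> {0, 1}" by auto
  then show "(\<Sum>k<2. quat_unitary a b c d k i * cnj (quat_unitary a b c d k j))
      = (if i = j then 1 else 0)"
    unfolding quat_unitary_def quat_mat_def sum_lessThan_2 N_def[symmetric] using N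
    by (auto simp: Complex_eq sqrtN add_divide_distrib[symmetric] algebra_simps)
      (simp_all add: sumN[symmetric] algebra_simps)
qed

(* These encodings send complementary strings to orthogonal states and make every estimate in
   success_le tight. *)
definition alice_unitary :: "bool list \<Rightarrow> nat \<Rightarrow> nat \<Rightarrow> complex" where
  "alice_unitary x =
    (if x = [False, False, False] then quat_unitary 1 0 0 0
     else if x = [False, True, True] then quat_unitary 0 1 0 0
     else if x = [True, False, True] then quat_unitary 0 0 1 0
     else if x = [True, True, False] then quat_unitary 0 0 0 1
     else if x = [True, True, True] then quat_unitary 0 1 1 1
     else if x = [True, False, False] then quat_unitary 1 0 (-1) 1
     else if x = [False, True, False] then quat_unitary 1 1 0 (-1)
     else quat_unitary 1 (-1) 1 0)"

definition alice_channel :: "bool list \<Rightarrow> complex mat \<Rightarrow> complex mat" where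
  "alice_channel x = unitary_channel (alice_unitary x)"

lemma valid_optimal_strategy: "valid_strategy phi_plus alice_channel bob_meas"
  unfolding valid_strategy_def
proof (intro conjI allI impI ballI)
  fix x :: "bool list"
  show "cptp (alice_channel x)"
    unfolding alice_channel_def alice_unitary_def
    by (auto intro!: cptp_unitary_channel unitary2_quat_unitary)
next
  fix y :: nat assume "y \<in> {1..3}"
  then have "y \<in> {1, 2, 3}" by auto
  then show "proj_meas 4 (bob_meas y)" by (rule proj_meas_bob_meas)
qed (rule density_phi_plus)

definition quat_form :: "real \<Rightarrow> real \<Rightarrow> real \<Rightarrow> real \<Rightarrow> nat \<Rightarrow> real" where
  "quat_form a b c d y = Re (quad_form 4 (bob_matrix y) (\<lambda>r. quat_mat a b c d (r div 2) (r mod 2)))"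

lemma quat_form_values:
  "quat_form 1 0 0 0 1 = 4"
  "quat_form 1 0 0 0 2 = 4"
  "quat_form 1 0 0 0 3 = 4"
  "quat_form 0 1 0 0 1 = 4"
  "quat_form 0 1 0 0 2 = - 4"
  "quat_form 0 1 0 0 3 = - 4"
  "quat_form 0 0 1 0 1 = - 4"
  "quat_form 0 0 1 0 2 = 4"
  "quat_form 0 0 1 0 3 = - 4"
  "quat_form 0 0 0 1 1 = - 4"
  "quat_form 0 0 0 1 2 = - 4"
  "quat_form 0 0 0 1 3 = 4"
  "quat_form 0 1 1 1 1 = - 12"
  "quat_form 0 1 1 1 2 = - 12"
  "quat_form 0 1 1 1 3 = - 12"
  "quat_form 1 0 (-1) 1 1 = - 12"
  "quat_form 1 0 (-1) 1 2 = 12"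
  "quat_form 1 0 (-1) 1 3 = 12"
  "quat_form 1 1 0 (-1) 1 = 12"
  "quat_form 1 1 0 (-1) 2 = - 12"
  "quat_form 1 1 0 (-1) 3 = 12"
  "quat_form 1 (-1) 1 0 1 = 12"
  "quat_form 1 (-1) 1 0 2 = 12"
  "quat_form 1 (-1) 1 0 3 = - 12"
  by (simp_all add: quat_form_def quad_form_def sum_lessThan_4 quat_mat_def bob_matrix_def)

lemma Re_tr_prod_quat_unitary:
  "Re (tr_prod 4 (\<lambda>i j. ampl (unitary_channel (quat_unitary a b c d)) 2 phi_plus $$ (i, j))
      (\<lambda>i j. of_real (1 / sqrt 6) * bob_matrix y i j))
    = quat_form a b c d y / (2 * sqrt 6 * (a\<^sup>2 + b\<^sup>2 + c\<^sup>2 + d\<^sup>2))"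
  unfolding tr_prod_phi_plus quat_unitary_def quad_form_scale quat_form_def by (simp add: power_divide)

lemma rac_bias_term_optimal_strategy:
  assumes x: "length x = 3" and y: "y \<in> {1..3}"
  shows "bit_sign (x ! (y - 1))
      * Re (tr_prod 4 (output_state phi_plus alice_channel x) (measured_observable bob_meas y))
    = 2 / sqrt 6"
proof -
  have eq: "tr_prod 4 (output_state phi_plus alice_channel x) (measured_observable bob_meas y)
      = tr_prod 4 (\<lambda>i j. ampl (unitary_channel (alice_unitary x)) 2 phi_plus $$ (i, j))
          (\<lambda>i j. of_real (1 / sqrt 6) * bob_matrix y i j)"
    unfolding measured_observable_def bob_meas_def output_state_def alice_channel_def
    by (intro tr_prod_cong binary_observable_meas_of_involution)
  have "x \<in> {[False, False, False], [False, False, True], [False, True, False], [False, True, True],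
      [True, False, False], [True, False, True], [True, True, False], [True, True, True]}"
    using x by (auto simp: numeral_3_eq_3 length_Suc_conv)
  moreover have "y \<in> {1, 2, 3}" using y by auto
  ultimately show ?thesis unfolding eq
    by (elim insertE emptyE; simp only: alice_unitary_def Re_tr_prod_quat_unitary quat_form_values
        list.inject bool.simps simp_thms if_True if_False) (simp_all add: bit_sign_def)
qed

lemma success_optimal_strategy: "success phi_plus alice_channel bob_meas = 1/2 + 1 / sqrt 6"
proof -
  have "rac_bias 4 (output_state phi_plus alice_channel) (measured_observable bob_meas)
      = (\<Sum>x\<in>{xs :: bool list. length xs = 3}. \<Sum>y\<in>{1..3::nat}. 2 / sqrt 6)"
    unfolding rac_bias_def
    by (intro sum.cong[OF refl] rac_bias_term_optimal_strategy) simp_all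
  also have "\<dots> = 48 / sqrt 6"
    unfolding sum_bool_lists_3 sum_1_to_3 by (simp add: UNIV_bool)
  finally show ?thesis using success_eq_rac_bias[OF valid_optimal_strategy] by simp
qed

theorem mainTheorem1:
  shows "(\<forall>\<rho> \<Lambda> Pm. valid_strategy \<rho> \<Lambda> Pm \<longrightarrow> success \<rho> \<Lambda> Pm \<le> 1/2 + 1 / sqrt 6) \<and>
         (\<exists>\<rho> \<Lambda> Pm. valid_strategy \<rho> \<Lambda> Pm \<and> success \<rho> \<Lambda> Pm = 1/2 + 1 / sqrt 6)"
  using success_le valid_optimal_strategy success_optimal_strategy by blast

end
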